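(* Let $V$ be a finite nonempty set and $f:\{0,1\}^V\to\{0,1\}^V$. If $f$ is even or odd, then for every $x\in\{0,1\}^V$ every vertex of the local interaction graph $Gf(x)$ has odd out-degree; in particular $Gf(x)$ has a cycle.
   Context: $\oplus$ is componentwise addition mod 2; $\|x\|$ is the number of $1$s of $x$, and $x$ is even (odd) if $\|x\|$ is even (odd). The conjugate is $\tilde f(x)=f(x)\oplus x$; $f$ is even (odd) if $\tilde f(\{0,1\}^V)$ is exactly the set of even (odd) points of $\{0,1\}^V$. For $x^{j\alpha}$ the point equal to $x$ except its $j$-component is $\alpha$, $Gf(x)$ is the signed digraph on $V$ with a positive arc from $j$ to $i$ if $f_i(x^{j1})-f_i(x^{j0})=1$ and a negative arc if it equals $-1$ (loops allowed; out-degree counts loops). A cycle is a subgraph whose underlying unsigned digraph is a directed cycle. *)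

theory Defs
  imports Main
begin

text \<open>Points of {0,1}^V are functions V \<Rightarrow> bool (True = 1), V a finite type.\<close>

definition xor_pt :: "('v \<Rightarrow> bool) \<Rightarrow> ('v \<Rightarrow> bool) \<Rightarrow> ('v \<Rightarrow> bool)" where
  "xor_pt x y = (\<lambda>i. x i \<noteq> y i)"

definition weight :: "('v::finite \<Rightarrow> bool) \<Rightarrow> nat" where
  "weight x = card {i. x i}"

definition conjugate :: "(('v \<Rightarrow> bool) \<Rightarrow> ('v \<Rightarrow> bool)) \<Rightarrow> ('v \<Rightarrow> bool) \<Rightarrow> ('v \<Rightarrow> bool)" where
  "conjugate f x = xor_pt (f x) x"

definition even_map :: "(('v::finite \<Rightarrow> bool) \<Rightarrow> ('v \<Rightarrow> bool)) \<Rightarrow> bool" where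
  "even_map f \<longleftrightarrow> range (conjugate f) = {x. even (weight x)}"

definition odd_map :: "(('v::finite \<Rightarrow> bool) \<Rightarrow> ('v \<Rightarrow> bool)) \<Rightarrow> bool" where
  "odd_map f \<longleftrightarrow> range (conjugate f) = {x. odd (weight x)}"

text \<open>Signed arcs of the local interaction graph Gf(x): (j, s, i) is an arc from j to i
  with sign s (True = positive, False = negative).  With x^{j\<alpha>} = x(j := \<alpha>),
  f_i(x^{j1}) - f_i(x^{j0}) = 1 gives a positive arc, = -1 a negative arc.\<close>

definition local_graph :: "(('v \<Rightarrow> bool) \<Rightarrow> ('v \<Rightarrow> bool)) \<Rightarrow> ('v \<Rightarrow> bool) \<Rightarrow> ('v \<times> bool \<times> 'v) set" where
  "local_graph f x =
     {(j, True, i) | j i. f (x(j := True)) i \<and> \<not> f (x(j := False)) i} \<union>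
     {(j, False, i) | j i. \<not> f (x(j := True)) i \<and> f (x(j := False)) i}"

definition out_degree :: "('v \<times> bool \<times> 'v) set \<Rightarrow> 'v \<Rightarrow> nat" where
  "out_degree G j = card {(s, i). (j, s, i) \<in> G}"

definition has_cycle :: "('v \<times> bool \<times> 'v) set \<Rightarrow> bool" where
  "has_cycle G \<longleftrightarrow> (\<exists>vs. vs \<noteq> [] \<and> distinct vs \<and>
     (\<forall>n < length vs. \<exists>s. (vs ! n, s, vs ! ((Suc n) mod length vs)) \<in> G))"

end

theory Submission
  imports Defs
begin

text \<open>Flipping x_j changes the conjugate in coordinate j and in exactly the coordinates i
  where f_i depends on x_j, i.e. where Gf(x) has an arc j \<rightarrow> i.  Since all values of the
  conjugate have the same parity, the number of these arcs plus one is even.  Finally a finite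
  digraph in which every vertex has an out-going arc contains a cycle: iterate a successor
  choice until a vertex repeats.\<close>

lemma even_weight_xor_pt_iff:
  fixes a b :: "'v::finite \<Rightarrow> bool"
  shows "even (weight (xor_pt a b)) \<longleftrightarrow> (even (weight a) \<longleftrightarrow> even (weight b))"
proof -
  let ?A = "{i. a i}" and ?B = "{i. b i}" and ?S = "{i. a i \<noteq> b i}"
  have "card ?A + card ?B = card (?A \<union> ?B) + card (?A \<inter> ?B)"
    by (rule card_Un_Int) auto
  moreover have "card (?A \<union> ?B) = card ?S + card (?A \<inter> ?B)"
  proof -
    have "?A \<union> ?B = ?S \<union> (?A \<inter> ?B)" "?S \<inter> (?A \<inter> ?B) = {}" by auto
    then show ?thesis by (simp add: card_Un_disjoint)
  qed
  ultimately have "card ?A + card ?B = card ?S + 2 * card (?A \<inter> ?B)" by simp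
  then show ?thesis unfolding weight_def xor_pt_def
    by (metis even_add even_mult_iff even_numeral)
qed

lemma weight_indicator: "weight (\<lambda>i::'v::finite. i = j) = 1"
  unfolding weight_def by simp

lemma conjugate_same_parity:
  assumes "even_map f \<or> odd_map f"
  shows "even (weight (conjugate f x)) \<longleftrightarrow> even (weight (conjugate f y))"
  using assms unfolding even_map_def odd_map_def by (metis mem_Collect_eq rangeI)

lemma out_degree_local_graph:
  fixes f :: "('v::finite \<Rightarrow> bool) \<Rightarrow> ('v \<Rightarrow> bool)"
  shows "out_degree (local_graph f x) j = weight (xor_pt (f (x(j := False))) (f (x(j := True))))"
proof -
  let ?y = "x(j := False)" and ?z = "x(j := True)"
  have "{(s, i). (j, s, i) \<in> local_graph f x} = (\<lambda>i. (f ?z i, i)) ` {i. f ?y i \<noteq> f ?z i}"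
    unfolding local_graph_def by auto
  moreover have "inj_on (\<lambda>i. (f ?z i, i)) {i. f ?y i \<noteq> f ?z i}"
    by (auto simp: inj_on_def)
  ultimately show ?thesis
    unfolding out_degree_def weight_def xor_pt_def by (simp add: card_image)
qed

lemma odd_out_degree_local_graph:
  fixes f :: "('v::finite \<Rightarrow> bool) \<Rightarrow> ('v \<Rightarrow> bool)"
  assumes "even_map f \<or> odd_map f"
  shows "odd (out_degree (local_graph f x) j)"
proof -
  let ?y = "x(j := False)" and ?z = "x(j := True)"
  have "xor_pt (conjugate f ?y) (conjugate f ?z) = xor_pt (xor_pt (f ?y) (f ?z)) (\<lambda>i. i = j)"
    unfolding conjugate_def xor_pt_def by (auto simp: fun_eq_iff)
  moreover have "even (weight (xor_pt (conjugate f ?y) (conjugate f ?z)))"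
    using conjugate_same_parity[OF assms] even_weight_xor_pt_iff by blast
  ultimately have "odd (weight (xor_pt (f ?y) (f ?z)))"
    using even_weight_xor_pt_iff[of "xor_pt (f ?y) (f ?z)" "\<lambda>i. i = j"] weight_indicator[of j]
    by simp
  then show ?thesis by (simp add: out_degree_local_graph)
qed

lemma finite_map_has_cycle:
  fixes sc :: "'v::finite \<Rightarrow> 'v"
  obtains vs where "vs \<noteq> []" "distinct vs"
    "\<forall>k < length vs. sc (vs ! k) = vs ! (Suc k mod length vs)"
proof -
  obtain v0 :: 'v where True by simp
  define seq where "seq n = (sc ^^ n) v0" for n
  have seq_Suc: "seq (Suc n) = sc (seq n)" for n unfolding seq_def by simp
  define P where "P n \<longleftrightarrow> (\<exists>m<n. seq m = seq n)" for n
  have "\<not> inj seq"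
    using finite_imageD[of seq UNIV] infinite_UNIV_nat by (metis finite)
  then have "\<exists>n. P n" unfolding inj_def P_def by (metis linorder_neqE_nat)
  define n where "n = (LEAST n. P n)"
  have "P n" unfolding n_def using \<open>\<exists>n. P n\<close> by (rule LeastI_ex)
  then obtain m where m: "m < n" "seq m = seq n" unfolding P_def by blast
  have "inj_on seq {..<n}"
  proof (rule linorder_inj_onI)
    fix a b assume "a < b" "b \<in> {..<n}"
    then show "seq a \<noteq> seq b" using not_less_Least[of b P] unfolding n_def P_def by auto
  qed auto
  define vs where "vs = map seq [m..<n]"
  have len: "length vs = n - m" and nth: "k < n - m \<Longrightarrow> vs ! k = seq (m + k)" for k
    unfolding vs_def by simp_all
  have "{m..<n} \<subseteq> {..<n}" by auto
  then have "distinct vs"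
    unfolding vs_def using inj_on_subset[OF \<open>inj_on seq {..<n}\<close>] by (simp add: distinct_map)
  moreover have "vs \<noteq> []" using len m by auto
  moreover have "sc (vs ! k) = vs ! (Suc k mod length vs)" if k: "k < length vs" for k
  proof (cases "Suc k < length vs")
    case True
    then show ?thesis using nth len k seq_Suc by simp
  next
    case False
    then have "Suc k = length vs" using k by simp
    then have "Suc k mod length vs = 0" "Suc (m + k) = n" using len m by simp_all
    then show ?thesis using nth len k m seq_Suc[of "m + k"] by simp
  qed
  ultimately show ?thesis using that by blast
qed

lemma has_cycle_if_no_sink:
  fixes G :: "('v::finite \<times> bool \<times> 'v) set"
  assumes "\<And>j. \<exists>s i. (j, s, i) \<in> G"
  shows "has_cycle G"
proof -
  obtain sc where sc: "\<And>j. \<exists>s. (j, s, sc j) \<in> G"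
    using assms by metis
  obtain vs where "vs \<noteq> []" "distinct vs"
    "\<forall>k < length vs. sc (vs ! k) = vs ! (Suc k mod length vs)"
    by (rule finite_map_has_cycle)
  then show ?thesis unfolding has_cycle_def using sc by metis
qed

theorem proposition4:
  fixes f :: "('v::finite \<Rightarrow> bool) \<Rightarrow> ('v \<Rightarrow> bool)"
  assumes "even_map f \<or> odd_map f"
  shows "\<forall>x. (\<forall>j. odd (out_degree (local_graph f x) j)) \<and> has_cycle (local_graph f x)"
proof (intro allI conjI)
  fix x
  show odd_deg: "odd (out_degree (local_graph f x) j)" for j
    using odd_out_degree_local_graph[OF assms] .
  show "has_cycle (local_graph f x)"
  proof (rule has_cycle_if_no_sink)
    fix j
    have "{(s, i). (j, s, i) \<in> local_graph f x} \<noteq> {}"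
      using odd_deg[of j] unfolding out_degree_def by (metis card.empty even_zero)
    then show "\<exists>s i. (j, s, i) \<in> local_graph f x" by auto
  qed
qed

end
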